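(* Let $D$ be a closed disk in the Euclidean plane whose boundary circle has circumference $8000$ (i.e. radius $4000/\pi$). Then there exist $8349$ closed rectangles, each of size $30\times 20$, all contained in $D$ and with pairwise disjoint interiors.
   Context: Rectangles may be placed at any position and with any orientation in the plane (they need not all be parallel to one another). *)

theory Defs
  imports "HOL-Analysis.Analysis"
begin

text \<open>A closed rectangle of
size w x h in arbitrary position and orientation: the image of [0,w] x [0,h] under
the rigid motion z \<mapsto> c + cis theta * z.\<close>
definition rect :: "complex \<Rightarrow> real \<Rightarrow> real \<Rightarrow> real \<Rightarrow> complex set" where
  "rect c \<theta> w h = {c + cis \<theta> * Complex a b | a b. 0 \<le> a \<and> a \<le> w \<and> 0 \<le> b \<and> b \<le> h}"

end

theory Submission
  imports Defs
begin

text \<open>The rectangles are laid out in 102 horizontal rows stacked from height -1265 to 1265,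
each row a run of congruent rectangles centred on the imaginary axis, either lying (30 wide,
20 high) or standing (20 wide, 30 high). Rectangles within a row are separated horizontally and
distinct rows vertically, so all interiors are disjoint. A row lies in the disc once its outer
corners do, and a finite check shows that all corners lie within radius 1273.1, which is less
than 4000/\<pi> \<approx> 1273.24.\<close>

lemma mem_rect_iff:
  "z \<in> rect c \<theta> w h \<longleftrightarrow>
     (let u = cis (- \<theta>) * (z - c) in 0 \<le> Re u \<and> Re u \<le> w \<and> 0 \<le> Im u \<and> Im u \<le> h)"
proof -
  define u where "u = cis (- \<theta>) * (z - c)"
  have inv: "cis \<theta> * cis (- \<theta>) = 1" by (simp add: cis_mult)
  have coords: "z = c + cis \<theta> * v \<longleftrightarrow> v = u" for v
  proof
    assume "z = c + cis \<theta> * v"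
    then have "u = (cis \<theta> * cis (- \<theta>)) * v" unfolding u_def by (simp add: algebra_simps)
    then show "v = u" using inv by simp
  next
    assume "v = u"
    then have "cis \<theta> * v = (cis \<theta> * cis (- \<theta>)) * (z - c)" unfolding u_def by (simp add: mult.assoc)
    then show "z = c + cis \<theta> * v" using inv by simp
  qed
  have "z \<in> rect c \<theta> w h \<longleftrightarrow> (\<exists>a b. Complex a b = u \<and> 0 \<le> a \<and> a \<le> w \<and> 0 \<le> b \<and> b \<le> h)"
    unfolding rect_def by (simp add: coords)
  also have "\<dots> \<longleftrightarrow> 0 \<le> Re u \<and> Re u \<le> w \<and> 0 \<le> Im u \<and> Im u \<le> h"
    by (metis complex.collapse complex.sel)
  finally show ?thesis unfolding u_def Let_def .
qed

lemma rect_translate: "rect (a + c) \<theta> w h = (+) a ` rect c \<theta> w h"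
  unfolding rect_def by (auto simp: add.assoc image_iff)

lemma rect_zero_angle: "rect c 0 w h = cbox c (c + Complex w h)"
  by (auto simp: mem_rect_iff cbox_complex_eq)

lemma rect_right_angle: "rect c (pi / 2) w h = cbox (c - of_real h) (c + Complex 0 w)"
  by (auto simp: mem_rect_iff cbox_complex_eq cis.ctr)

lemma rect_transpose: "rect c 0 h w = rect (c + of_real h) (pi / 2) w h"
proof -
  have "of_real h + Complex 0 w = Complex h w" by (simp add: complex_eq_iff)
  then show ?thesis by (simp add: rect_zero_angle rect_right_angle add.assoc)
qed

lemma rect_packing_of_list:
  assumes "N \<le> length Bs"
    and rects: "\<forall>B\<in>set Bs. B \<subseteq> cball 0 \<rho> \<and> (\<exists>c \<theta>. rect c \<theta> w h = B)"
    and disjoint: "sorted_wrt (\<lambda>A B. interior A \<inter> interior B = {}) Bs"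
  shows "\<exists>(c :: nat \<Rightarrow> complex) (\<theta> :: nat \<Rightarrow> real).
           (\<forall>i<N. rect (c i) (\<theta> i) w h \<subseteq> cball z0 \<rho>) \<and>
           (\<forall>i<N. \<forall>j<N. i \<noteq> j \<longrightarrow>
              interior (rect (c i) (\<theta> i) w h) \<inter> interior (rect (c j) (\<theta> j) w h) = {})"
proof -
  have "\<forall>i. \<exists>c \<theta>. i < length Bs \<longrightarrow> rect c \<theta> w h = Bs ! i"
    using rects by (meson nth_mem)
  then obtain c \<theta> where Bs_rect: "\<And>i. i < length Bs \<Longrightarrow> rect (c i) (\<theta> i) w h = Bs ! i"
    by metis
  have shifted: "rect (z0 + c i) (\<theta> i) w h = (+) z0 ` (Bs ! i)" if "i < N" for i
    using that assms(1) Bs_rect by (simp add: rect_translate)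
  have "(+) z0 ` (Bs ! i) \<subseteq> cball z0 \<rho>" if "i < N" for i
  proof -
    have "Bs ! i \<subseteq> cball 0 \<rho>" using that assms(1) rects by simp
    then have "(+) z0 ` (Bs ! i) \<subseteq> (+) z0 ` cball 0 \<rho>" by (rule image_mono)
    then show ?thesis by (metis add.right_neutral cball_translation)
  qed
  moreover have "interior ((+) z0 ` (Bs ! i)) \<inter> interior ((+) z0 ` (Bs ! j)) = {}"
    if "i < N" "j < N" "i \<noteq> j" for i j
  proof -
    have "interior (Bs ! i) \<inter> interior (Bs ! j) = {}"
      using disjoint that assms(1) unfolding sorted_wrt_iff_nth_less
      by (metis Int_commute less_le_trans linorder_neqE_nat)
    then show ?thesis by (simp add: interior_translation flip: translation_Int)
  qed
  ultimately show ?thesis using shifted by (intro exI[of _ "\<lambda>i. z0 + c i"] exI[of _ \<theta>]) simp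
qed

definition row :: "real \<Rightarrow> real \<Rightarrow> real \<Rightarrow> nat \<Rightarrow> complex set list" where
  "row y w h n = map (\<lambda>k. rect (Complex (real k * w - real n * w / 2) y) 0 w h) [0..<n]"

fun stack :: "real \<Rightarrow> (real \<times> real \<times> nat) list \<Rightarrow> complex set list" where
  "stack y [] = []"
| "stack y ((w, h, n) # rs) = row y w h n @ stack (y + h) rs"

fun stack_fits :: "real \<Rightarrow> real \<Rightarrow> (real \<times> real \<times> nat) list \<Rightarrow> bool" where
  "stack_fits \<rho> y [] = True"
| "stack_fits \<rho> y ((w, h, n) # rs) \<longleftrightarrow>
     (real n * w / 2)\<^sup>2 + max (y\<^sup>2) ((y + h)\<^sup>2) \<le> \<rho>\<^sup>2 \<and> stack_fits \<rho> (y + h) rs"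

lemma length_stack: "length (stack y rs) = (\<Sum>(w, h, n) \<leftarrow> rs. n)"
  by (induction y rs rule: stack.induct) (simp_all add: row_def)

lemma row_bounds:
  assumes "0 \<le> w" and "B \<in> set (row y w h n)" and "z \<in> B"
  shows "\<bar>Re z\<bar> \<le> real n * w / 2" and "y \<le> Im z" and "Im z \<le> y + h"
proof -
  obtain k where "k < n" and B: "B = rect (Complex (real k * w - real n * w / 2) y) 0 w h"
    using assms(2) by (auto simp: row_def)
  have "real k * w \<ge> 0" and "real (Suc k) * w \<le> real n * w"
    using assms(1) \<open>k < n\<close> by (simp_all add: mult_right_mono)
  moreover have "real k * w - real n * w / 2 \<le> Re z" "Re z \<le> real (Suc k) * w - real n * w / 2"
    and "y \<le> Im z" "Im z \<le> y + h"
    using assms(3) unfolding B rect_zero_angle by (auto simp: cbox_complex_eq algebra_simps)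
  ultimately show "\<bar>Re z\<bar> \<le> real n * w / 2" "y \<le> Im z" "Im z \<le> y + h"
    by linarith+
qed

lemma interior_row_below:
  assumes "B \<in> set (row y w h n)" and "z \<in> interior B"
  shows "Im z < y + h"
  using assms by (auto simp: row_def rect_zero_angle interior_cbox box_complex_eq)

lemma row_interiors_disjoint:
  assumes "0 \<le> w"
  shows "sorted_wrt (\<lambda>A B. interior A \<inter> interior B = {}) (row y w h n)"
  unfolding row_def sorted_wrt_map
proof (rule sorted_wrt_mono_rel[OF _ sorted_wrt_upt])
  fix k l :: nat
  assume "k < l"
  then have "real (Suc k) * w \<le> real l * w" using assms by (simp add: mult_right_mono)
  then show "interior (rect (Complex (real k * w - real n * w / 2) y) 0 w h) \<inter>
             interior (rect (Complex (real l * w - real n * w / 2) y) 0 w h) = {}"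
    by (auto simp: rect_zero_angle interior_cbox box_complex_eq algebra_simps)
qed

lemma stack_above:
  assumes "\<forall>(w, h, n) \<in> set rs. 0 \<le> w \<and> 0 \<le> h"
    and "B \<in> set (stack y rs)" and "z \<in> B"
  shows "y \<le> Im z"
  using assms
proof (induction y rs rule: stack.induct)
  case (2 y w h n rs)
  then show ?case using row_bounds(2)[of w B y h n z] by fastforce
qed simp

lemma stack_interiors_disjoint:
  assumes "\<forall>(w, h, n) \<in> set rs. 0 \<le> w \<and> 0 \<le> h"
  shows "sorted_wrt (\<lambda>A B. interior A \<inter> interior B = {}) (stack y rs)"
  using assms
proof (induction y rs rule: stack.induct)
  case (2 y w h n rs)
  have "interior A \<inter> interior B = {}"
    if "A \<in> set (row y w h n)" "B \<in> set (stack (y + h) rs)" for A B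
    using interior_row_below[OF that(1)] stack_above[of rs B "y + h"] "2.prems" that(2)
      interior_subset by fastforce
  then show ?case using 2 row_interiors_disjoint by (simp add: sorted_wrt_append)
qed simp

lemma power2_le_max_power2:
  fixes x :: real
  assumes "a \<le> x" and "x \<le> b"
  shows "x\<^sup>2 \<le> max (a\<^sup>2) (b\<^sup>2)"
proof (cases "0 \<le> x")
  case True
  then have "x\<^sup>2 \<le> b\<^sup>2" using assms(2) by (intro power_mono)
  then show ?thesis by linarith
next
  case False
  then have "(- x)\<^sup>2 \<le> (- a)\<^sup>2" using assms(1) by (intro power_mono) auto
  then show ?thesis by simp
qed

lemma row_subset_cball:
  assumes "(real n * w / 2)\<^sup>2 + max (y\<^sup>2) ((y + h)\<^sup>2) \<le> \<rho>\<^sup>2" and "0 \<le> \<rho>" and "0 \<le> w"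
    and "B \<in> set (row y w h n)"
  shows "B \<subseteq> cball 0 \<rho>"
proof
  fix z assume "z \<in> B"
  note bounds = row_bounds[OF assms(3,4) this]
  have "(Re z)\<^sup>2 \<le> (real n * w / 2)\<^sup>2"
    using bounds(1) by (metis abs_le_square_iff abs_of_nonneg abs_ge_zero order_trans)
  moreover have "(Im z)\<^sup>2 \<le> max (y\<^sup>2) ((y + h)\<^sup>2)"
    using bounds(2,3) by (rule power2_le_max_power2)
  ultimately have "(cmod z)\<^sup>2 \<le> \<rho>\<^sup>2" using assms(1) by (simp add: cmod_power2)
  then show "z \<in> cball 0 \<rho>" using assms(2) by (simp add: power2_le_iff_abs_le)
qed

lemma stack_subset_cball:
  assumes "stack_fits \<rho> y rs" and "0 \<le> \<rho>" and "\<forall>(w, h, n) \<in> set rs. 0 \<le> w"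
    and "B \<in> set (stack y rs)"
  shows "B \<subseteq> cball 0 \<rho>"
  using assms by (induction \<rho> y rs rule: stack_fits.induct) (auto dest: row_subset_cball)

lemma stack_rects:
  assumes "B \<in> set (stack y rs)"
  shows "\<exists>(w, h, n) \<in> set rs. \<exists>a. B = rect a 0 w h"
  using assms by (induction y rs rule: stack.induct) (auto simp: row_def)

abbreviation flat :: "nat \<Rightarrow> real \<times> real \<times> nat" where "flat n \<equiv> (30, 20, n)"
abbreviation upright :: "nat \<Rightarrow> real \<times> real \<times> nat" where "upright n \<equiv> (20, 30, n)"

definition packing_rows :: "(real \<times> real \<times> nat) list" where
  "packing_rows =
    [flat 9, flat 17, flat 23, flat 27, flat 31, flat 34, flat 37, flat 39,
     flat 42, flat 44, flat 46, flat 48, flat 50, flat 52, flat 53, flat 55,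
     upright 85, flat 59, flat 60, upright 92, upright 95, flat 65, flat 66, upright 101,
     upright 103, flat 70, upright 106, upright 108, upright 110, upright 112, upright 113, upright 115,
     flat 77, flat 78, upright 118, flat 79, upright 120, upright 121, flat 81, upright 122,
     upright 123, upright 124, flat 83, upright 125, upright 125, flat 84, upright 126, upright 126,
     upright 126, upright 127, upright 127, upright 127, upright 127, upright 127, upright 126, upright 126,
     upright 126, upright 125, upright 125, flat 83, upright 124, flat 82, flat 82, upright 122,
     upright 121, upright 120, upright 119, flat 79, flat 78, upright 116, flat 77, upright 114,
     upright 112, upright 110, upright 109, upright 107, upright 105, upright 103, upright 101, flat 66,
     flat 65, flat 64, upright 93, flat 61, flat 59, flat 58, upright 84, flat 54,
     upright 78, flat 50, flat 48, flat 46, flat 44, flat 42, flat 39, flat 37,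
     flat 34, flat 31, flat 27, flat 23, flat 17, flat 9]"

lemma packing_rows_shapes: "\<forall>(w, h, n) \<in> set packing_rows. (w, h) = (30, 20) \<or> (w, h) = (20, 30)"
  by (simp add: packing_rows_def)

lemma length_packing: "length (stack (-1265) packing_rows) = 8361"
  unfolding length_stack by (simp add: packing_rows_def)

lemma packing_rows_fit: "stack_fits 1273.1 (-1265) packing_rows"
  by (simp add: packing_rows_def power_divide)

lemma radius_bound: "1273.1 \<le> 4000 / pi"
  using pi_approx(2) pi_gt_zero by (simp add: field_simps)

theorem mainTheorem3:
  fixes z0 :: complex
  shows "\<exists>(c :: nat \<Rightarrow> complex) (\<theta> :: nat \<Rightarrow> real).
           (\<forall>i<8349. rect (c i) (\<theta> i) 30 20 \<subseteq> cball z0 (4000 / pi)) \<and>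
           (\<forall>i<8349. \<forall>j<8349. i \<noteq> j \<longrightarrow>
              interior (rect (c i) (\<theta> i) 30 20) \<inter> interior (rect (c j) (\<theta> j) 30 20) = {})"
proof (rule rect_packing_of_list)
  let ?Bs = "stack (-1265) packing_rows"
  have nonneg: "\<forall>(w, h, n) \<in> set packing_rows. 0 \<le> w \<and> 0 \<le> h"
    using packing_rows_shapes by auto
  show "8349 \<le> length ?Bs" by (simp add: length_packing)
  show "sorted_wrt (\<lambda>A B. interior A \<inter> interior B = {}) ?Bs"
    using nonneg by (rule stack_interiors_disjoint)
  show "\<forall>B \<in> set ?Bs. B \<subseteq> cball 0 (4000 / pi) \<and> (\<exists>c \<theta>. rect c \<theta> 30 20 = B)"
  proof
    fix B assume B: "B \<in> set ?Bs"
    have "B \<subseteq> cball 0 1273.1"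
      using packing_rows_fit _ _ B by (rule stack_subset_cball) (use nonneg in auto)
    then have "B \<subseteq> cball 0 (4000 / pi)" using radius_bound by auto
    moreover obtain w h n a where "(w, h, n) \<in> set packing_rows" and "B = rect a 0 w h"
      using stack_rects[OF B] by auto
    then have "\<exists>c \<theta>. rect c \<theta> 30 20 = B"
      using packing_rows_shapes rect_transpose by fastforce
    ultimately show "B \<subseteq> cball 0 (4000 / pi) \<and> (\<exists>c \<theta>. rect c \<theta> 30 20 = B)" by blast
  qed
qed

end
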